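(* Let $x\in\mathbb{R}^n$ have positive entries with $\max_{i,j}x_i/x_j\le b$, and let $y\in\mathbb{R}^n$ be nonnegative and nonzero. Then $$D(x,y)\le\min\left(1+\sqrt n,\,1+\sqrt b\right)\sqrt2\,\sin(x,y).$$
   Context: $\sin(x,y)$ is the sine of the angle between $x$ and $y$, and $$D(x,y)=\frac{\left\|\frac{y}{\|y\|_1}-\frac{x}{\|x\|_1}\right\|_2}{\left\|\frac{y}{\|y\|_1}\right\|_2}.$$ *)

theory Defs
  imports "HOL-Analysis.Analysis"
begin

definition l1norm :: "real ^ 'n \<Rightarrow> real" where
  "l1norm x = (\<Sum>i\<in>UNIV. \<bar>x $ i\<bar>)"

definition vec_angle :: "real ^ 'n \<Rightarrow> real ^ 'n \<Rightarrow> real" where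
  "vec_angle x y = arccos ((x \<bullet> y) / (norm x * norm y))"

definition sin_angle :: "real ^ 'n \<Rightarrow> real ^ 'n \<Rightarrow> real" where
  "sin_angle x y = sin (vec_angle x y)"

definition Dist :: "real ^ 'n \<Rightarrow> real ^ 'n \<Rightarrow> real" where
  "Dist x y = norm ((1 / l1norm y) *\<^sub>R y - (1 / l1norm x) *\<^sub>R x) / norm ((1 / l1norm y) *\<^sub>R y)"

end

theory Submission
  imports Defs
begin

text \<open>
  Normalise \<open>x\<close> and \<open>y\<close> to unit vectors \<open>X\<close> and \<open>Y\<close>; both \<open>D\<close> and the sine are
  scale invariant. With \<open>k = \<parallel>Y\<parallel>\<^sub>1 / \<parallel>X\<parallel>\<^sub>1\<close> one has \<open>D = \<parallel>Y - k X\<parallel> \<le> \<parallel>Y - X\<parallel> + \<bar>1 - k\<bar>\<close>, and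
  \<open>\<bar>1 - k\<bar> = \<bar>\<Sum>\<^sub>i (X - Y)\<^sub>i\<bar> / \<parallel>X\<parallel>\<^sub>1\<close>. That coordinate sum is at most \<open>\<surd>n \<parallel>X - Y\<parallel>\<close> by
  Cauchy-Schwarz against the all-ones vector, and at most \<open>\<surd>b \<parallel>X - Y\<parallel> \<parallel>X\<parallel>\<^sub>1\<close> by
  Cauchy-Schwarz with weights \<open>X\<^sub>i\<close>; since \<open>\<parallel>X\<parallel>\<^sub>1 \<ge> 1\<close> either way \<open>\<bar>1 - k\<bar> \<le> K \<parallel>Y - X\<parallel>\<close>.
  Finally \<open>\<parallel>Y - X\<parallel>\<^sup>2 = 2 - 2c \<le> 2 (1 - c\<^sup>2) = 2 sin\<^sup>2\<close> for \<open>c = cos \<in> [0, 1]\<close>.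
\<close>

lemma l1norm_scaleR: "l1norm (c *\<^sub>R x) = \<bar>c\<bar> * l1norm x"
  by (simp add: l1norm_def abs_mult sum_distrib_left)

lemma l1norm_eq_sum: "(\<And>i. x $ i \<ge> 0) \<Longrightarrow> l1norm x = (\<Sum>i\<in>UNIV. x $ i)"
  by (simp add: l1norm_def)

lemma norm_le_l1norm: "norm x \<le> l1norm x"
  unfolding l1norm_def by (rule norm_le_l1_cart)

lemma abs_sum_le_sqrt_card_norm:
  "\<bar>\<Sum>i\<in>UNIV. (w :: real ^ 'n) $ i\<bar> \<le> sqrt (real CARD('n)) * norm w"
proof -
  have "(\<Sum>i\<in>UNIV. w $ i) = w \<bullet> (\<chi> i. 1)" by (simp add: inner_vec_def)
  moreover have "norm ((\<chi> i. 1) :: real ^ 'n) = sqrt (real CARD('n))"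
    by (simp add: norm_vec_def L2_set_def)
  ultimately show ?thesis
    using Cauchy_Schwarz_ineq2[of w "\<chi> i. 1"] by (simp add: mult.commute)
qed

lemma sum_abs_sq_le_weighted:
  fixes w x :: "real ^ 'n"
  assumes "\<And>i. x $ i > 0"
  shows "(\<Sum>i\<in>UNIV. \<bar>w $ i\<bar>)\<^sup>2 \<le> (\<Sum>i\<in>UNIV. x $ i) * (\<Sum>i\<in>UNIV. (w $ i)\<^sup>2 / x $ i)"
proof -
  define p :: "real ^ 'n" where "p = (\<chi> i. sqrt (x $ i))"
  define q :: "real ^ 'n" where "q = (\<chi> i. \<bar>w $ i\<bar> / sqrt (x $ i))"
  have "x $ i \<noteq> 0" for i using assms[of i] by simp
  then have "p \<bullet> q = (\<Sum>i\<in>UNIV. \<bar>w $ i\<bar>)"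
    using assms by (simp add: p_def q_def inner_vec_def less_imp_le)
  moreover have "p \<bullet> p = (\<Sum>i\<in>UNIV. x $ i)"
    using assms by (simp add: p_def inner_vec_def less_imp_le)
  moreover have "q \<bullet> q = (\<Sum>i\<in>UNIV. (w $ i)\<^sup>2 / x $ i)"
    using assms by (auto simp: q_def inner_vec_def less_imp_le power2_eq_square intro!: sum.cong)
  ultimately show ?thesis
    using Cauchy_Schwarz_ineq[of p q] by simp
qed

lemma abs_sum_mult_norm_le_sqrt_ratio:
  fixes w x :: "real ^ 'n"
  assumes pos: "\<And>i. x $ i > 0" and ratio: "\<And>i j. x $ i / x $ j \<le> b"
  shows "\<bar>\<Sum>i\<in>UNIV. w $ i\<bar> * norm x \<le> sqrt b * norm w * (\<Sum>i\<in>UNIV. x $ i)"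
proof -
  define S where "S = (\<Sum>i\<in>UNIV. x $ i)"
  obtain j where min: "\<And>i. x $ j \<le> x $ i"
    using ex_min_if_finite[of "range (($) x)"] by (auto simp: not_less)
  define m where "m = x $ j"
  have "m > 0" using pos by (simp add: m_def)
  have "0 < b" using ratio[of j j] pos[of j] by simp
  have "S \<ge> 0" unfolding S_def using pos by (simp add: sum_nonneg less_imp_le)
  have "x $ i \<le> b * m" for i
    using ratio[of i j] \<open>m > 0\<close> by (simp add: m_def divide_le_eq)
  then have "(norm x)\<^sup>2 \<le> (\<Sum>i\<in>UNIV. x $ i * (b * m))"
    using pos unfolding norm_vec_def L2_set_def
    by (simp add: sum_nonneg) (intro sum_mono, simp add: power2_eq_square less_imp_le)
  also have "\<dots> = b * m * S"
    by (metis S_def sum_distrib_right mult.commute)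
  finally have norm_x: "(norm x)\<^sup>2 \<le> b * m * S" .
  have "(\<Sum>i\<in>UNIV. (w $ i)\<^sup>2 / x $ i) \<le> (\<Sum>i\<in>UNIV. (w $ i)\<^sup>2 / m)"
    using min pos \<open>m > 0\<close> by (intro sum_mono divide_left_mono) (auto simp: m_def)
  also have "\<dots> = (norm w)\<^sup>2 / m"
    by (simp add: norm_vec_def L2_set_def sum_divide_distrib[symmetric] sum_nonneg)
  finally have "(\<Sum>i\<in>UNIV. \<bar>w $ i\<bar>)\<^sup>2 \<le> S * ((norm w)\<^sup>2 / m)"
    using sum_abs_sq_le_weighted[OF pos, of w] \<open>S \<ge> 0\<close>
    unfolding S_def by (meson mult_left_mono order_trans)
  then have "(\<Sum>i\<in>UNIV. \<bar>w $ i\<bar>)\<^sup>2 * (norm x)\<^sup>2 \<le> S * ((norm w)\<^sup>2 / m) * (b * m * S)"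
    using norm_x \<open>S \<ge> 0\<close> \<open>m > 0\<close> by (intro mult_mono) auto
  also have "\<dots> = (sqrt b * norm w * S)\<^sup>2"
    using \<open>m > 0\<close> \<open>b > 0\<close> by (simp add: power_mult_distrib) (simp add: power2_eq_square)
  finally have "((\<Sum>i\<in>UNIV. \<bar>w $ i\<bar>) * norm x)\<^sup>2 \<le> (sqrt b * norm w * S)\<^sup>2"
    by (simp add: power_mult_distrib)
  moreover have "0 \<le> sqrt b * norm w * S" using \<open>b > 0\<close> \<open>S \<ge> 0\<close> by simp
  ultimately have "(\<Sum>i\<in>UNIV. \<bar>w $ i\<bar>) * norm x \<le> sqrt b * norm w * S"
    by (rule power2_le_imp_le)
  moreover have "\<bar>\<Sum>i\<in>UNIV. w $ i\<bar> * norm x \<le> (\<Sum>i\<in>UNIV. \<bar>w $ i\<bar>) * norm x"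
    by (rule mult_right_mono[OF sum_abs]) simp
  ultimately show ?thesis unfolding S_def by linarith
qed

lemma Dist_scaleR:
  assumes "c > 0" "d > 0"
  shows "Dist (c *\<^sub>R x) (d *\<^sub>R y) = Dist x y"
  using assms by (simp add: Dist_def l1norm_scaleR)

lemma sin_angle_scaleR:
  assumes "c > 0" "d > 0"
  shows "sin_angle (c *\<^sub>R x) (d *\<^sub>R y) = sin_angle x y"
  using assms by (simp add: sin_angle_def vec_angle_def)

lemma Dist_unit_le:
  fixes x y :: "real ^ 'n"
  assumes "norm x = 1" "norm y = 1" "\<And>i. x $ i \<ge> 0" "\<And>i. y $ i \<ge> 0"
  shows "Dist x y \<le> norm (y - x) + \<bar>\<Sum>i\<in>UNIV. (x - y) $ i\<bar> / l1norm x"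
proof -
  define k where "k = l1norm y / l1norm x"
  have "l1norm x \<ge> 1" "l1norm y \<ge> 1"
    using norm_le_l1norm[of x] norm_le_l1norm[of y] assms(1,2) by auto
  then have "Dist x y = norm (l1norm y *\<^sub>R ((1 / l1norm y) *\<^sub>R y - (1 / l1norm x) *\<^sub>R x))"
    using assms(2) by (simp add: Dist_def divide_inverse mult.commute)
  also have "\<dots> = norm ((y - x) + (1 - k) *\<^sub>R x)"
    using \<open>l1norm y \<ge> 1\<close> by (simp add: k_def scaleR_diff_right algebra_simps)
  also have "\<dots> \<le> norm (y - x) + \<bar>1 - k\<bar>"
    using norm_triangle_ineq[of "y - x" "(1 - k) *\<^sub>R x"] assms(1) by simp
  also have "1 - k = (\<Sum>i\<in>UNIV. (x - y) $ i) / l1norm x"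
    using \<open>l1norm x \<ge> 1\<close> assms(3,4)
    by (simp add: k_def l1norm_eq_sum sum_subtractf field_simps)
  finally show ?thesis using \<open>l1norm x \<ge> 1\<close> by simp
qed

lemma abs_inner_div_norms_le_1: "\<bar>(x \<bullet> y) / (norm x * norm y)\<bar> \<le> 1"
proof (cases "x = 0 \<or> y = 0")
  case False
  then show ?thesis
    using Cauchy_Schwarz_ineq2[of x y] by (simp add: abs_divide abs_mult divide_le_eq_1)
qed auto

lemma sin_angle_eq: "sin_angle x y = sqrt (1 - ((x \<bullet> y) / (norm x * norm y))\<^sup>2)"
  unfolding sin_angle_def vec_angle_def by (rule sin_arccos_abs[OF abs_inner_div_norms_le_1])

lemma norm_diff_le_sqrt2_sin_angle:
  fixes x y :: "real ^ 'n"
  assumes "norm x = 1" "norm y = 1" "x \<bullet> y \<ge> 0"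
  shows "norm (y - x) \<le> sqrt 2 * sin_angle x y"
proof -
  define c where "c = x \<bullet> y"
  have "c \<le> 1" using norm_cauchy_schwarz[of x y] assms by (simp add: c_def)
  have "x \<bullet> x = 1" "y \<bullet> y = 1" using assms(1,2) by (simp_all add: dot_square_norm)
  then have "(norm (y - x))\<^sup>2 = 2 - 2 * c"
    by (simp add: power2_norm_eq_inner inner_diff_left inner_diff_right inner_commute c_def)
  then have "norm (y - x) = sqrt (2 - 2 * c)" by (simp add: real_sqrt_unique)
  also have "\<dots> \<le> sqrt (2 * (1 - c\<^sup>2))"
    using assms(3) \<open>c \<le> 1\<close> by (simp add: c_def power2_eq_square mult_left_le)
  also have "\<dots> = sqrt 2 * sin_angle x y"
    using assms(1,2) by (simp add: sin_angle_eq c_def real_sqrt_mult[symmetric] right_diff_distrib)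
  finally show ?thesis .
qed

lemma Dist_unit_le_mult_sin_angle:
  fixes x y :: "real ^ 'n"
  assumes "norm x = 1" "norm y = 1" "\<And>i. x $ i \<ge> 0" "\<And>i. y $ i \<ge> 0" "K \<ge> 0"
    and "\<bar>\<Sum>i\<in>UNIV. (x - y) $ i\<bar> \<le> K * norm (x - y) * l1norm x"
  shows "Dist x y \<le> (1 + K) * sqrt 2 * sin_angle x y"
proof -
  have "l1norm x \<ge> 1" using norm_le_l1norm[of x] assms(1) by simp
  with assms(6) have "\<bar>\<Sum>i\<in>UNIV. (x - y) $ i\<bar> / l1norm x \<le> K * norm (y - x)"
    by (simp add: divide_le_eq norm_minus_commute)
  then have "Dist x y \<le> (1 + K) * norm (y - x)"
    using Dist_unit_le[OF assms(1-4)] by (simp add: algebra_simps)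
  also have "x \<bullet> y \<ge> 0"
    unfolding inner_vec_def using assms(3,4) by (simp add: sum_nonneg)
  then have "(1 + K) * norm (y - x) \<le> (1 + K) * (sqrt 2 * sin_angle x y)"
    using norm_diff_le_sqrt2_sin_angle[OF assms(1,2)] assms(5) by (intro mult_left_mono) auto
  finally show ?thesis by (simp add: mult.assoc)
qed

theorem lemmaA4:
  fixes x y :: "real ^ 'n" and b :: real
  assumes "\<forall>i. x $ i > 0"
    and "\<forall>i j. x $ i / x $ j \<le> b"
    and "\<forall>i. y $ i \<ge> 0"
    and "y \<noteq> 0"
  shows "Dist x y \<le> min (1 + sqrt (real CARD('n))) (1 + sqrt b) * sqrt 2 * sin_angle x y"
proof -
  have "x \<noteq> 0" using assms(1) by (metis less_irrefl zero_index)
  define X where "X = (1 / norm x) *\<^sub>R x"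
  define Y where "Y = (1 / norm y) *\<^sub>R y"
  have X: "norm X = 1" "\<And>i. X $ i > 0" "\<And>i j. X $ i / X $ j \<le> b"
    using \<open>x \<noteq> 0\<close> assms(1,2) by (simp_all add: X_def)
  have Y: "norm Y = 1" "\<And>i. Y $ i \<ge> 0"
    using assms(3,4) by (simp_all add: Y_def)
  have scale: "Dist x y = Dist X Y" "sin_angle x y = sin_angle X Y"
    using \<open>x \<noteq> 0\<close> assms(4) by (simp_all add: X_def Y_def Dist_scaleR sin_angle_scaleR)
  note unit_bound = Dist_unit_le_mult_sin_angle[OF X(1) Y(1) less_imp_le[OF X(2)] Y(2)]
  have "l1norm X \<ge> 1" using norm_le_l1norm[of X] X(1) by simp
  have "b \<ge> 1" using X(2)[of undefined] X(3)[of undefined undefined] by simp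
  have "Dist X Y \<le> (1 + sqrt (real CARD('n))) * sqrt 2 * sin_angle X Y"
    using \<open>l1norm X \<ge> 1\<close> by (intro unit_bound order_trans[OF abs_sum_le_sqrt_card_norm])
      (auto simp: mult_le_cancel_left1 mult_less_0_iff)
  moreover have "Dist X Y \<le> (1 + sqrt b) * sqrt 2 * sin_angle X Y"
    using abs_sum_mult_norm_le_sqrt_ratio[OF X(2,3), of "X - Y"] X(1) \<open>b \<ge> 1\<close>
    by (intro unit_bound) (simp_all add: l1norm_eq_sum less_imp_le X(2))
  ultimately show ?thesis unfolding scale
    by (cases "1 + sqrt (real CARD('n)) \<le> 1 + sqrt b") (simp_all only: min_def if_True if_False)
qed

end
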